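(* Let $M_s=\mathbf{Sp}(2,\mathbb{R})/\mathbf{SL}(2,\mathbb{R})_s$ with the $\mathbf{Sp}(2,\mathbb{R})$-invariant metric $g_K=2(f^4)^2-2f^3\odot f^5+f^2\odot f^6-4f^1\odot f^7$ (notation as in the context). The most general $\mathbf{Sp}(2,\mathbb{R})$-invariant 3-form $\phi$ on $M_s$ (i.e. of the form $\tfrac16\phi_{\mu\nu\rho}f^\mu\wedge f^\nu\wedge f^\rho$ with constant coefficients, $\mu,\nu,\rho\in\{1,\dots,7\}$, satisfying $\mathcal{L}_X\phi=0$ for all $X$ in $D_s$) such that $(g_K,\phi)$ is compatible is the 1-parameter family $$\phi=2f^{147}+\tfrac12f^{246}+f^{345}+qf^{136}+\frac{1}{q}f^{257},\qquad q\neq0.$$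
   Context: Realize $\mathfrak{sp}(2,\mathbb{R})$ as the real $4\times 4$ matrices $$E=\begin{pmatrix} a_5&a_7&a_9&2a_{10}\\ -a_4&a_6&a_8&a_9\\ a_2&a_3&-a_6&-a_7\\ -2a_1&a_2&a_4&-a_5\end{pmatrix}$$ with basis $E_I=\partial E/\partial a_I$. Put $f_1=E_1,\ f_2=E_3,\ f_3=E_4,\ f_4=E_6-E_5,\ f_5=E_7,\ f_6=E_8,\ f_7=E_{10},\ f_8=E_2,\ f_9=E_5+E_6,\ f_{10}=E_9$, regarded as left-invariant vector fields on $\mathbf{Sp}(2,\mathbb{R})$, with dual left-invariant 1-forms $(f^I)$. $\mathbf{SL}(2,\mathbb{R})_s$ is the subgroup with Lie algebra $\mathrm{Span}(E_2,E_5+E_6,E_9)=\mathrm{Span}(f_8,f_9,f_{10})$; $D_s$ is the distribution spanned by $f_8,f_9,f_{10}$, with leaf space $M_s$; forms in $f^1,\dots,f^7$ with constant coefficients annihilated by $\mathcal{L}_X$, $X\in D_s$, descend to $M_s$. A pair $(g,\phi)$ is compatible if $(f_\mu\lrcorner\phi)\wedge(f_\nu\lrcorner\phi)\wedge\phi=3g(f_\mu,f_\nu)\,f^1\wedge\cdots\wedge f^7$ for all $\mu,\nu=1,\dots,7$. Notation: $f^I\odot f^J=\tfrac12(f^I\otimes f^J+f^J\otimes f^I)$, $(f^I)^2=f^I\odot f^I$, $f^{\mu\nu\rho}=f^\mu\wedge f^\nu\wedge f^\rho$. *)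

theory Defs
  imports Complex_Main "HOL-Combinatorics.Permutations"
begin

text \<open>Real 4x4 matrices are modelled as functions nat => nat => real, only entries with
indices 0..3 being relevant.\<close>

type_synonym mat4 = "nat \<Rightarrow> nat \<Rightarrow> real"

definition Emat :: "(nat \<Rightarrow> real) \<Rightarrow> mat4" where
  "Emat a = (\<lambda>i j.
     [[a 5, a 7, a 9, 2 * a 10],
      [- a 4, a 6, a 8, a 9],
      [a 2, a 3, - a 6, - a 7],
      [-2 * a 1, a 2, a 4, - a 5]] ! i ! j)"

definition Ebas :: "nat \<Rightarrow> mat4" where
  "Ebas I = Emat (\<lambda>J. if J = I then 1 else 0)"

definition madd :: "mat4 \<Rightarrow> mat4 \<Rightarrow> mat4" where
  "madd A B = (\<lambda>i j. A i j + B i j)"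

definition msub :: "mat4 \<Rightarrow> mat4 \<Rightarrow> mat4" where
  "msub A B = (\<lambda>i j. A i j - B i j)"

definition mmul :: "mat4 \<Rightarrow> mat4 \<Rightarrow> mat4" where
  "mmul A B = (\<lambda>i j. \<Sum>k<4. A i k * B k j)"

definition mbr :: "mat4 \<Rightarrow> mat4 \<Rightarrow> mat4" where
  "mbr A B = msub (mmul A B) (mmul B A)"

definition fbas :: "nat \<Rightarrow> mat4" where
  "fbas I = (if I = 1 then Ebas 1 else if I = 2 then Ebas 3 else if I = 3 then Ebas 4
     else if I = 4 then msub (Ebas 6) (Ebas 5) else if I = 5 then Ebas 7
     else if I = 6 then Ebas 8 else if I = 7 then Ebas 10 else if I = 8 then Ebas 2
     else if I = 9 then madd (Ebas 5) (Ebas 6) else Ebas 9)"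

text \<open>Dual basis f^I: coordinates of a matrix of sp(2,R) w.r.t. f_1..f_10.\<close>
definition fcoord :: "mat4 \<Rightarrow> nat \<Rightarrow> real" where
  "fcoord Y = (THE c. (\<forall>J. J \<notin> {1..10} \<longrightarrow> c J = 0) \<and>
      (\<forall>i<4. \<forall>j<4. Y i j = (\<Sum>J=1..10. c J * fbas J i j)))"

text \<open>A 3-form with constant coefficients phi_{mu nu rho} (mu,nu,rho in 1..7),
  phi = 1/6 phi_{mu nu rho} f^{mu nu rho}, represented by its totally antisymmetric
  coefficient array.\<close>
definition is_coeff3 :: "(nat \<Rightarrow> nat \<Rightarrow> nat \<Rightarrow> real) \<Rightarrow> bool" where
  "is_coeff3 \<phi> \<longleftrightarrow>
     (\<forall>a b c. \<phi> a b c = - \<phi> b a c \<and> \<phi> a b c = - \<phi> a c b) \<and>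
     (\<forall>a b c. \<not> (a \<in> {1..7} \<and> b \<in> {1..7} \<and> c \<in> {1..7}) \<longrightarrow> \<phi> a b c = 0)"

text \<open>Evaluation of the 3-form on three left-invariant vector fields (Lie algebra elements).\<close>
definition eval3 :: "(nat \<Rightarrow> nat \<Rightarrow> nat \<Rightarrow> real) \<Rightarrow> mat4 \<Rightarrow> mat4 \<Rightarrow> mat4 \<Rightarrow> real" where
  "eval3 \<phi> Y1 Y2 Y3 = (\<Sum>a=1..7. \<Sum>b=1..7. \<Sum>c=1..7.
      \<phi> a b c * fcoord Y1 a * fcoord Y2 b * fcoord Y3 c)"

definition lie_deriv3 :: "mat4 \<Rightarrow> (nat \<Rightarrow> nat \<Rightarrow> nat \<Rightarrow> real) \<Rightarrow> mat4 \<Rightarrow> mat4 \<Rightarrow> mat4 \<Rightarrow> real" where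
  "lie_deriv3 X \<phi> Y1 Y2 Y3 =
     - eval3 \<phi> (mbr X Y1) Y2 Y3 - eval3 \<phi> Y1 (mbr X Y2) Y3 - eval3 \<phi> Y1 Y2 (mbr X Y3)"

definition Ds_invariant :: "(nat \<Rightarrow> nat \<Rightarrow> nat \<Rightarrow> real) \<Rightarrow> bool" where
  "Ds_invariant \<phi> \<longleftrightarrow> (\<forall>X \<in> {fbas 8, fbas 9, fbas 10}.
      \<forall>i\<in>{1..10}. \<forall>j\<in>{1..10}. \<forall>k\<in>{1..10}. lie_deriv3 X \<phi> (fbas i) (fbas j) (fbas k) = 0)"

text \<open>Value on (f_1,...,f_7) of the 7-form beta /\ gamma /\ phi, with beta, gamma 2-forms and
  phi a 3-form given by antisymmetric coefficient arrays (determinant convention, so that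
  f^1/\.../\f^7 (f_1,...,f_7) = 1).\<close>
definition wedge223_top :: "(nat \<Rightarrow> nat \<Rightarrow> real) \<Rightarrow> (nat \<Rightarrow> nat \<Rightarrow> real) \<Rightarrow>
    (nat \<Rightarrow> nat \<Rightarrow> nat \<Rightarrow> real) \<Rightarrow> real" where
  "wedge223_top \<beta> \<gamma> \<phi> = (1 / (2 * 2 * 6)) * (\<Sum>p\<in>{p. p permutes {1..7::nat}}.
      of_int (sign p) * \<beta> (p 1) (p 2) * \<gamma> (p 3) (p 4) * \<phi> (p 5) (p 6) (p 7))"

text \<open>Interior product f_mu _| phi has coefficients phi_{mu a b}.\<close>
definition compatible :: "(nat \<Rightarrow> nat \<Rightarrow> real) \<Rightarrow> (nat \<Rightarrow> nat \<Rightarrow> nat \<Rightarrow> real) \<Rightarrow> bool" where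
  "compatible g \<phi> \<longleftrightarrow> (\<forall>\<mu>\<in>{1..7}. \<forall>\<nu>\<in>{1..7}.
      wedge223_top (\<phi> \<mu>) (\<phi> \<nu>) \<phi> = 3 * g \<mu> \<nu>)"

text \<open>Symmetric product f^I . f^J as a bilinear form, evaluated on (f_mu, f_nu).\<close>
definition odot :: "nat \<Rightarrow> nat \<Rightarrow> nat \<Rightarrow> nat \<Rightarrow> real" where
  "odot I J \<mu> \<nu> = ((if I = \<mu> \<and> J = \<nu> then 1 else 0) + (if J = \<mu> \<and> I = \<nu> then 1 else 0)) / 2"

definition gK :: "nat \<Rightarrow> nat \<Rightarrow> real" where
  "gK \<mu> \<nu> = 2 * odot 4 4 \<mu> \<nu> - 2 * odot 3 5 \<mu> \<nu> + odot 2 6 \<mu> \<nu> - 4 * odot 1 7 \<mu> \<nu>"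

definition basic3 :: "nat \<Rightarrow> nat \<Rightarrow> nat \<Rightarrow> nat \<Rightarrow> nat \<Rightarrow> nat \<Rightarrow> real" where
  "basic3 i j k = (\<lambda>a b c.
     (if (a, b, c) = (i, j, k) then 1 else 0) + (if (a, b, c) = (j, k, i) then 1 else 0)
   + (if (a, b, c) = (k, i, j) then 1 else 0) - (if (a, b, c) = (j, i, k) then 1 else 0)
   - (if (a, b, c) = (i, k, j) then 1 else 0) - (if (a, b, c) = (k, j, i) then 1 else 0))"

definition phi_family :: "real \<Rightarrow> nat \<Rightarrow> nat \<Rightarrow> nat \<Rightarrow> real" where
  "phi_family q = (\<lambda>a b c. 2 * basic3 1 4 7 a b c + 1/2 * basic3 2 4 6 a b c
      + basic3 3 4 5 a b c + q * basic3 1 3 6 a b c + (1 / q) * basic3 2 5 7 a b c)"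

end

theory Submission
  imports Defs
begin

text \<open>
  The isotropy algebra spanned by \<open>f\<^sub>8, f\<^sub>9, f\<^sub>10\<close> acts on \<open>span(f\<^sub>1, \<dots>, f\<^sub>7)\<close> through the
  structure constants of \<open>sp(2,\<real>)\<close>, so \<open>D\<^sub>s\<close>-invariance is a linear system on the 35
  coefficients of \<open>\<phi>\<close>. Its solutions form the five-parameter family
  \<open>Ds_invariant_form A B C D E\<close>. For these forms the compatibility equations at
  \<open>(\<mu>,\<nu>) = (4,4), (3,5), (1,6), (2,7)\<close> read \<open>E\<^sup>3 = 1\<close>, \<open>E (AD + 4BC) = 1\<close>,
  \<open>E (2B\<^sup>2 - AC) = 0\<close>, \<open>E (BD + 2C\<^sup>2) = 0\<close>; they force \<open>E = 1\<close>, \<open>B = C = 0\<close>, \<open>AD = 1\<close>,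
  and conversely all compatibility equations hold for \<open>(A, 0, 0, 1/A, 1)\<close>, i.e. for
  \<open>phi_family A\<close>. The 7-forms are signed sums over the permutations of \<open>{1..7}\<close>; by
  antisymmetry only permutations increasing on the blocks \<open>{1,2}\<close>, \<open>{3,4}\<close>, \<open>{5,6,7}\<close>
  need to be summed, which keeps the symbolic evaluation small.
\<close>

section \<open>Antisymmetric coefficient arrays\<close>
lemma is_coeff3_antisym:
  assumes "is_coeff3 \<phi>"
  shows is_coeff3_swap12: "\<phi> b a c = - \<phi> a b c" and is_coeff3_swap23: "\<phi> a c b = - \<phi> a b c"
  using assms unfolding is_coeff3_def by metis+

lemma is_coeff3_vanishes:
  assumes "is_coeff3 \<phi>" and "a \<notin> {1..7} \<or> b \<notin> {1..7} \<or> c \<notin> {1..7}"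
  shows "\<phi> a b c = 0"
  using assms unfolding is_coeff3_def by blast

lemma is_coeff3_normalise:
  assumes "is_coeff3 \<phi>"
  shows "b < a \<Longrightarrow> \<phi> a b c = - \<phi> b a c" and "c < b \<Longrightarrow> \<phi> a b c = - \<phi> a c b"
    and "\<phi> a a c = 0" and "\<phi> a b b = 0"
    and "7 < a \<Longrightarrow> \<phi> a b c = 0" and "7 < b \<Longrightarrow> \<phi> a b c = 0" and "7 < c \<Longrightarrow> \<phi> a b c = 0"
  using is_coeff3_antisym[OF assms, of a a c] is_coeff3_antisym[OF assms, of a b b]
    is_coeff3_antisym[OF assms, of b a c] is_coeff3_antisym[OF assms, of a c b]
  by (simp_all add: is_coeff3_vanishes[OF assms])

lemma is_coeff3_cycle: "is_coeff3 \<phi> \<Longrightarrow> \<phi> a b c = \<phi> c a b"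
  using is_coeff3_swap12[of \<phi> c a b] is_coeff3_swap23[of \<phi> a c b] by simp

lemma is_coeff3_eqI:
  assumes \<phi>: "is_coeff3 \<phi>" and \<psi>: "is_coeff3 \<psi>"
    and sorted: "\<And>a b c. 1 \<le> a \<Longrightarrow> a < b \<Longrightarrow> b < c \<Longrightarrow> c \<le> 7 \<Longrightarrow> \<phi> a b c = \<psi> a b c"
  shows "\<phi> = \<psi>"
proof (intro ext)
  have increasing: "\<phi> a b c = \<psi> a b c" if "a < b" "b < c" for a b c
  proof (cases "1 \<le> a \<and> c \<le> 7")
    case True then show ?thesis using that sorted by blast
  next
    case False then show ?thesis using that
      by (auto simp: is_coeff3_vanishes[OF \<phi>] is_coeff3_vanishes[OF \<psi>])
  qed
  have first_two_increasing: "\<phi> a b c = \<psi> a b c" if "a < b" for a b c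
  proof (cases c rule: linorder_cases[of _ a])
    case less then show ?thesis
      using increasing[of c a b] that is_coeff3_cycle[OF \<phi>, of a b c] is_coeff3_cycle[OF \<psi>, of a b c]
      by simp
  next
    case equal then show ?thesis
      using is_coeff3_normalise(3) \<phi> \<psi> is_coeff3_cycle by metis
  next
    case greater then show ?thesis
      using that increasing[of a c b] increasing[of a b c] is_coeff3_swap23[OF \<phi>, of a b c]
        is_coeff3_swap23[OF \<psi>, of a b c] is_coeff3_normalise(4)[OF \<phi>] is_coeff3_normalise(4)[OF \<psi>]
      by (cases c b rule: linorder_cases) auto
  qed
  fix a b c :: nat
  show "\<phi> a b c = \<psi> a b c"
    using first_two_increasing[of a b c] first_two_increasing[of b a c]
      is_coeff3_swap12[OF \<phi>, of a b c] is_coeff3_swap12[OF \<psi>, of a b c]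
      is_coeff3_normalise(3)[OF \<phi>] is_coeff3_normalise(3)[OF \<psi>]
    by (cases a b rule: linorder_cases) auto
qed

lemma basic3_swap12: "basic3 i j k b a c = - basic3 i j k a b c"
proof -
  have "((b, a, c) = (i, j, k)) = ((a, b, c) = (j, i, k))" "((b, a, c) = (j, k, i)) = ((a, b, c) = (k, j, i))"
    "((b, a, c) = (k, i, j)) = ((a, b, c) = (i, k, j))" "((b, a, c) = (j, i, k)) = ((a, b, c) = (i, j, k))"
    "((b, a, c) = (i, k, j)) = ((a, b, c) = (k, i, j))" "((b, a, c) = (k, j, i)) = ((a, b, c) = (j, k, i))"
    by auto
  then show ?thesis unfolding basic3_def by simp
qed

lemma basic3_swap23: "basic3 i j k a c b = - basic3 i j k a b c"
proof -
  have "((a, c, b) = (i, j, k)) = ((a, b, c) = (i, k, j))" "((a, c, b) = (j, k, i)) = ((a, b, c) = (j, i, k))"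
    "((a, c, b) = (k, i, j)) = ((a, b, c) = (k, j, i))" "((a, c, b) = (j, i, k)) = ((a, b, c) = (j, k, i))"
    "((a, c, b) = (i, k, j)) = ((a, b, c) = (i, j, k))" "((a, c, b) = (k, j, i)) = ((a, b, c) = (k, i, j))"
    by auto
  then show ?thesis unfolding basic3_def by simp
qed

lemma is_coeff3_basic3:
  assumes "i \<in> {1..7}" "j \<in> {1..7}" "k \<in> {1..7}"
  shows "is_coeff3 (basic3 i j k)"
  unfolding is_coeff3_def
proof (intro conjI allI impI)
  fix a b c
  show "basic3 i j k a b c = - basic3 i j k b a c" "basic3 i j k a b c = - basic3 i j k a c b"
    by (rule basic3_swap12, rule basic3_swap23)
  assume "\<not> (a \<in> {1..7} \<and> b \<in> {1..7} \<and> c \<in> {1..7})"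
  then have "(a, b, c) \<noteq> (i, j, k)" "(a, b, c) \<noteq> (j, k, i)" "(a, b, c) \<noteq> (k, i, j)"
    "(a, b, c) \<noteq> (j, i, k)" "(a, b, c) \<noteq> (i, k, j)" "(a, b, c) \<noteq> (k, j, i)"
    using assms by auto
  then show "basic3 i j k a b c = 0" unfolding basic3_def by (simp del: prod.inject)
qed

lemma is_coeff3_add: "is_coeff3 \<phi> \<Longrightarrow> is_coeff3 \<psi> \<Longrightarrow> is_coeff3 (\<lambda>a b c. \<phi> a b c + \<psi> a b c)"
  unfolding is_coeff3_def by (metis minus_add_distrib add_0)

lemma is_coeff3_diff: "is_coeff3 \<phi> \<Longrightarrow> is_coeff3 \<psi> \<Longrightarrow> is_coeff3 (\<lambda>a b c. \<phi> a b c - \<psi> a b c)"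
  unfolding is_coeff3_def by (metis minus_diff_eq minus_diff_commute diff_zero)

lemma is_coeff3_scale: "is_coeff3 \<phi> \<Longrightarrow> is_coeff3 (\<lambda>a b c. r * \<phi> a b c)"
  unfolding is_coeff3_def by (metis mult_minus_right mult_zero_right)

lemma is_coeff3_permute_value:
  assumes "is_coeff3 \<phi>" and "\<phi> a b c = v"
  shows "\<phi> b a c = - v" and "\<phi> a c b = - v" and "\<phi> c b a = - v"
    and "\<phi> b c a = v" and "\<phi> c a b = v"
  using assms is_coeff3_swap12[OF assms(1)] is_coeff3_swap23[OF assms(1)] is_coeff3_cycle[OF assms(1)]
  by metis+

lemma is_coeff3_repeated:
  assumes "is_coeff3 \<phi>"
  shows "\<phi> a a c = 0" and "\<phi> a b b = 0" and "\<phi> a b a = 0"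
  using is_coeff3_normalise(3,4)[OF assms] is_coeff3_cycle[OF assms] by metis+

section \<open>Coordinates and brackets in \<open>sp(2,\<real>)\<close>\<close>

definition agree4 :: "mat4 \<Rightarrow> mat4 \<Rightarrow> bool" where
  "agree4 X Y \<longleftrightarrow> (\<forall>i<4. \<forall>j<4. X i j = Y i j)"

lemma atLeastAtMost_1_10: "{1..10::nat} = {1,2,3,4,5,6,7,8,9,10}"
  by (auto simp: numeral_eq_Suc le_Suc_eq)

lemma atLeastAtMost_1_7: "{1..7::nat} = {1,2,3,4,5,6,7}"
  by (auto simp: numeral_eq_Suc le_Suc_eq)

lemma lessThan_4: "{..<4::nat} = {0,1,2,3}"
  by (auto simp: numeral_eq_Suc less_Suc_eq)

lemma agree4_iff: "agree4 X Y \<longleftrightarrow> (\<forall>i\<in>{0,1,2,3}. \<forall>j\<in>{0,1,2,3}. X i j = Y i j)"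
  unfolding agree4_def lessThan_4[symmetric] lessThan_iff Ball_def ..

definition E_index :: "nat \<Rightarrow> nat" where
  "E_index I = [0, 1, 3, 4, 0, 7, 8, 10, 2, 0, 9] ! I"

definition fbas_param :: "nat \<Rightarrow> nat \<Rightarrow> real" where
  "fbas_param I J = (if I = 4 then of_bool (J = 6) - of_bool (J = 5)
     else if I = 9 then of_bool (J = 5) + of_bool (J = 6)
     else of_bool (J = E_index I))"

definition fcoord_param :: "(nat \<Rightarrow> real) \<Rightarrow> nat \<Rightarrow> real" where
  "fcoord_param a J = (if J = 4 then (a 6 - a 5) / 2 else if J = 9 then (a 5 + a 6) / 2
     else if J \<in> {1..10} then a (E_index J) else 0)"

definition param_bracket :: "(nat \<Rightarrow> real) \<Rightarrow> (nat \<Rightarrow> real) \<Rightarrow> nat \<Rightarrow> real" where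
  "param_bracket a b I = (if I = 1 then 2 * a 1 * b 5 + a 2 * b 4 - a 4 * b 2 - 2 * a 5 * b 1
   else if I = 2 then -2 * a 1 * b 7 + a 2 * b 5 + a 2 * b 6 - a 3 * b 4 + a 4 * b 3 - a 5 * b 2 - a 6 * b 2 + 2 * a 7 * b 1
   else if I = 3 then 2 * a 2 * b 7 + 2 * a 3 * b 6 - 2 * a 6 * b 3 - 2 * a 7 * b 2
   else if I = 4 then -2 * a 1 * b 9 + a 2 * b 8 + a 4 * b 5 - a 4 * b 6 - a 5 * b 4 + a 6 * b 4 - a 8 * b 2 + 2 * a 9 * b 1
   else if I = 5 then 4 * a 1 * b 10 - a 2 * b 9 + a 4 * b 7 - a 7 * b 4 + a 9 * b 2 - 4 * a 10 * b 1
   else if I = 6 then - a 2 * b 9 - a 3 * b 8 - a 4 * b 7 + a 7 * b 4 + a 8 * b 3 + a 9 * b 2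
   else if I = 7 then -2 * a 2 * b 10 - a 3 * b 9 + a 5 * b 7 - a 6 * b 7 - a 7 * b 5 + a 7 * b 6 + a 9 * b 3 + 2 * a 10 * b 2
   else if I = 8 then -2 * a 4 * b 9 + 2 * a 6 * b 8 - 2 * a 8 * b 6 + 2 * a 9 * b 4
   else if I = 9 then -2 * a 4 * b 10 + a 5 * b 9 + a 6 * b 9 + a 7 * b 8 - a 8 * b 7 - a 9 * b 5 - a 9 * b 6 + 2 * a 10 * b 4
   else if I = 10 then 2 * a 5 * b 10 + a 7 * b 9 - a 9 * b 7 - 2 * a 10 * b 5 else 0)"

lemma atLeastAtMost_1_10_cases:
  "I \<in> {1..10::nat} \<Longrightarrow> I = 1 \<or> I = 2 \<or> I = 3 \<or> I = 4 \<or> I = 5 \<or> I = 6 \<or> I = 7 \<or> I = 8 \<or> I = 9 \<or> I = 10"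
  unfolding atLeastAtMost_1_10 by simp

lemma fbas_agree4_Emat: "I \<in> {1..10} \<Longrightarrow> agree4 (fbas I) (Emat (fbas_param I))"
  unfolding agree4_iff
  by (drule atLeastAtMost_1_10_cases, elim disjE)
    (simp_all add: fbas_def Ebas_def Emat_def fbas_param_def E_index_def madd_def msub_def)

lemma mbr_agree4_Emat:
  assumes "agree4 X (Emat a)" and "agree4 Y (Emat b)"
  shows "agree4 (mbr X Y) (Emat (param_bracket a b))"
  using assms unfolding agree4_iff
  by (simp add: mbr_def msub_def mmul_def lessThan_4 Emat_def param_bracket_def algebra_simps)

lemma agree4_Emat_fbas_combination_iff:
  assumes "\<forall>J. J \<notin> {1..10} \<longrightarrow> c J = 0"
  shows "agree4 (Emat a) (\<lambda>i j. \<Sum>J=1..10. c J * fbas J i j) \<longleftrightarrow> c = fcoord_param a"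
proof
  assume "agree4 (Emat a) (\<lambda>i j. \<Sum>J=1..10. c J * fbas J i j)"
  then have a: "a 1 = c 1" "a 2 = c 8" "a 3 = c 2" "a 4 = c 3" "a 5 = c 9 - c 4" "a 6 = c 9 + c 4"
    "a 7 = c 5" "a 8 = c 6" "a 9 = c 10" "a 10 = c 7"
    unfolding agree4_iff atLeastAtMost_1_10
    by (simp_all add: Emat_def fbas_def Ebas_def madd_def msub_def)
  show "c = fcoord_param a"
  proof
    fix J
    show "c J = fcoord_param a J"
    proof (cases "J \<in> {1..10}")
      case True
      then show ?thesis
        using a by (elim atLeastAtMost_1_10_cases[elim_format] disjE) (simp_all add: fcoord_param_def E_index_def)
    next
      case False
      then show ?thesis using assms by (auto simp: fcoord_param_def)
    qed
  qed
next
  assume "c = fcoord_param a"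
  then show "agree4 (Emat a) (\<lambda>i j. \<Sum>J=1..10. c J * fbas J i j)"
    unfolding agree4_iff atLeastAtMost_1_10
    by (simp add: Emat_def fbas_def Ebas_def madd_def msub_def fcoord_param_def E_index_def field_simps)
qed

lemma fcoord_eq_fcoord_param:
  assumes "agree4 Y (Emat a)"
  shows "fcoord Y = fcoord_param a"
proof -
  have "agree4 Y Z \<longleftrightarrow> agree4 (Emat a) Z" for Z
    using assms unfolding agree4_def by auto
  then show ?thesis
    unfolding fcoord_def agree4_def[symmetric]
    using agree4_Emat_fbas_combination_iff[of _ a]
    by (intro the_equality) (auto simp: fcoord_param_def)
qed

lemma fcoord_fbas:
  assumes "I \<in> {1..10}"
  shows "fcoord (fbas I) J = of_bool (J = I)"
proof (cases "J \<in> {1..10}")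
  case True
  with assms show ?thesis
    unfolding fcoord_eq_fcoord_param[OF fbas_agree4_Emat[OF assms]]
    by (elim atLeastAtMost_1_10_cases[elim_format] disjE)
      (simp_all add: fcoord_param_def fbas_param_def E_index_def)
next
  case False
  with assms show ?thesis
    unfolding fcoord_eq_fcoord_param[OF fbas_agree4_Emat[OF assms]]
    by (auto simp: fcoord_param_def)
qed

lemma fcoord_mbr_fbas:
  assumes "x \<in> {1..10}" and "i \<in> {1..10}"
  shows "fcoord (mbr (fbas x) (fbas i)) = fcoord_param (param_bracket (fbas_param x) (fbas_param i))"
  using assms by (intro fcoord_eq_fcoord_param mbr_agree4_Emat fbas_agree4_Emat)

section \<open>Invariance under \<open>D\<^sub>s\<close>\<close>
lemma sum_1_7_of_bool_eq:
  assumes "j \<notin> {1..7} \<Longrightarrow> g j = 0"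
  shows "(\<Sum>a=1..7. g a * of_bool (a = j)) = (g (j::nat) :: real)"
proof -
  have "(\<Sum>a=1..7. g a * of_bool (a = j)) = (\<Sum>a=1..7. if a = j then g a else 0)"
    by (intro sum.cong) auto
  then show ?thesis using assms by (simp add: sum.delta')
qed

lemma eval3_fbas:
  assumes \<phi>: "is_coeff3 \<phi>" and i: "i \<in> {1..10}" and j: "j \<in> {1..10}" and k: "k \<in> {1..10}"
  shows "eval3 \<phi> Y (fbas j) (fbas k) = (\<Sum>a=1..7. \<phi> a j k * fcoord Y a)"
    and "eval3 \<phi> (fbas i) Y (fbas k) = (\<Sum>b=1..7. \<phi> i b k * fcoord Y b)"
    and "eval3 \<phi> (fbas i) (fbas j) Y = (\<Sum>c=1..7. \<phi> i j c * fcoord Y c)"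
proof -
  note collapse = sum_1_7_of_bool_eq and vanish = is_coeff3_vanishes[OF \<phi>]
  have "eval3 \<phi> Y (fbas j) (fbas k) =
      (\<Sum>a=1..7. \<Sum>b=1..7. \<Sum>c=1..7. (\<phi> a b c * fcoord Y a * of_bool (b = j)) * of_bool (c = k))"
    unfolding eval3_def fcoord_fbas[OF j] fcoord_fbas[OF k] ..
  also have "\<dots> = (\<Sum>a=1..7. \<Sum>b=1..7. (\<phi> a b k * fcoord Y a) * of_bool (b = j))"
    by (intro sum.cong refl collapse) (simp add: vanish)
  also have "\<dots> = (\<Sum>a=1..7. \<phi> a j k * fcoord Y a)"
    by (intro sum.cong refl collapse) (simp add: vanish)
  finally show "eval3 \<phi> Y (fbas j) (fbas k) = (\<Sum>a=1..7. \<phi> a j k * fcoord Y a)" .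
  have "eval3 \<phi> (fbas i) Y (fbas k) =
      (\<Sum>a=1..7. \<Sum>b=1..7. \<Sum>c=1..7. (\<phi> a b c * of_bool (a = i) * fcoord Y b) * of_bool (c = k))"
    unfolding eval3_def fcoord_fbas[OF i] fcoord_fbas[OF k] ..
  also have "\<dots> = (\<Sum>a=1..7. \<Sum>b=1..7. \<phi> a b k * of_bool (a = i) * fcoord Y b)"
    by (intro sum.cong refl collapse) (simp add: vanish)
  also have "\<dots> = (\<Sum>b=1..7. \<Sum>a=1..7. (\<phi> a b k * fcoord Y b) * of_bool (a = i))"
    by (subst sum.swap) (simp add: mult_ac)
  also have "\<dots> = (\<Sum>b=1..7. \<phi> i b k * fcoord Y b)"
    by (intro sum.cong refl collapse) (simp add: vanish)
  finally show "eval3 \<phi> (fbas i) Y (fbas k) = (\<Sum>b=1..7. \<phi> i b k * fcoord Y b)" .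
  have "eval3 \<phi> (fbas i) (fbas j) Y =
      (\<Sum>a=1..7. \<Sum>b=1..7. \<Sum>c=1..7. \<phi> a b c * of_bool (a = i) * of_bool (b = j) * fcoord Y c)"
    unfolding eval3_def fcoord_fbas[OF i] fcoord_fbas[OF j] ..
  also have "\<dots> = (\<Sum>a=1..7. \<Sum>c=1..7. \<Sum>b=1..7. (\<phi> a b c * of_bool (a = i) * fcoord Y c) * of_bool (b = j))"
    by (rule sum.cong[OF refl], subst sum.swap) (simp add: mult_ac)
  also have "\<dots> = (\<Sum>a=1..7. \<Sum>c=1..7. \<phi> a j c * of_bool (a = i) * fcoord Y c)"
    by (intro sum.cong refl collapse) (simp add: vanish)
  also have "\<dots> = (\<Sum>c=1..7. \<Sum>a=1..7. (\<phi> a j c * fcoord Y c) * of_bool (a = i))"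
    by (subst sum.swap) (simp add: mult_ac)
  also have "\<dots> = (\<Sum>c=1..7. \<phi> i j c * fcoord Y c)"
    by (intro sum.cong refl collapse) (simp add: vanish)
  finally show "eval3 \<phi> (fbas i) (fbas j) Y = (\<Sum>c=1..7. \<phi> i j c * fcoord Y c)" .
qed

definition bracket_pairing :: "(nat \<Rightarrow> real) \<Rightarrow> nat \<Rightarrow> nat \<Rightarrow> real" where
  "bracket_pairing g x i = (\<Sum>a=1..7. g a * fcoord (mbr (fbas x) (fbas i)) a)"

lemma bracket_pairing_Ds:
  "bracket_pairing g 8 1 = 0" "bracket_pairing g 8 2 = 0" "bracket_pairing g 8 3 = g 1"
  "bracket_pairing g 8 4 = 0" "bracket_pairing g 8 5 = 2 * g 2" "bracket_pairing g 8 6 = g 3"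
  "bracket_pairing g 8 7 = - 2 * g 5" "bracket_pairing g 8 8 = 0" "bracket_pairing g 8 9 = 0"
  "bracket_pairing g 8 10 = 0"
  "bracket_pairing g 9 1 = - 2 * g 1" "bracket_pairing g 9 2 = - 2 * g 2" "bracket_pairing g 9 3 = 0"
  "bracket_pairing g 9 4 = 0" "bracket_pairing g 9 5 = 0" "bracket_pairing g 9 6 = 2 * g 6"
  "bracket_pairing g 9 7 = 2 * g 7" "bracket_pairing g 9 8 = 0" "bracket_pairing g 9 9 = 0"
  "bracket_pairing g 9 10 = 0"
  "bracket_pairing g 10 1 = 2 * g 3" "bracket_pairing g 10 2 = g 5" "bracket_pairing g 10 3 = 2 * g 6"
  "bracket_pairing g 10 4 = 0" "bracket_pairing g 10 5 = - g 7" "bracket_pairing g 10 6 = 0"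
  "bracket_pairing g 10 7 = 0" "bracket_pairing g 10 8 = 0" "bracket_pairing g 10 9 = 0"
  "bracket_pairing g 10 10 = 0"
  unfolding bracket_pairing_def atLeastAtMost_1_7
  by (simp_all add: fcoord_mbr_fbas fcoord_param_def param_bracket_def
      fbas_param_def E_index_def)

lemma lie_deriv3_fbas:
  assumes "is_coeff3 \<phi>" and "x \<in> {1..10}" "i \<in> {1..10}" "j \<in> {1..10}" "k \<in> {1..10}"
  shows "lie_deriv3 (fbas x) \<phi> (fbas i) (fbas j) (fbas k) =
    - (bracket_pairing (\<lambda>a. \<phi> a j k) x i + bracket_pairing (\<lambda>b. \<phi> i b k) x j
      + bracket_pairing (\<lambda>c. \<phi> i j c) x k)"
  unfolding lie_deriv3_def eval3_fbas[OF assms(1,3-5)] bracket_pairing_def by simp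

lemma Ds_invariant_iff_bracket_pairing:
  assumes "is_coeff3 \<phi>"
  shows "Ds_invariant \<phi> \<longleftrightarrow> (\<forall>x\<in>{8,9,10}. \<forall>i\<in>{1..10}. \<forall>j\<in>{1..10}. \<forall>k\<in>{1..10}.
    bracket_pairing (\<lambda>a. \<phi> a j k) x i + bracket_pairing (\<lambda>b. \<phi> i b k) x j
      + bracket_pairing (\<lambda>c. \<phi> i j c) x k = 0)"
proof -
  have "x \<in> {1..10}" if "x \<in> {8,9,10::nat}" for x using that by auto
  then show ?thesis
    unfolding Ds_invariant_def using lie_deriv3_fbas[OF assms] by (auto simp: add_eq_0_iff neg_equal_0_iff_equal)
qed

lemma Ds_invariant_bracket_pairing_eq_0:
  assumes "is_coeff3 \<phi>" and "Ds_invariant \<phi>"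
    and "x \<in> {8,9,10}" "i \<in> {1..10}" "j \<in> {1..10}" "k \<in> {1..10}"
  shows "bracket_pairing (\<lambda>a. \<phi> a j k) x i + bracket_pairing (\<lambda>b. \<phi> i b k) x j
      + bracket_pairing (\<lambda>c. \<phi> i j c) x k = 0"
  using assms(2-) unfolding Ds_invariant_iff_bracket_pairing[OF assms(1)] by blast

definition Ds_invariant_form :: "real \<Rightarrow> real \<Rightarrow> real \<Rightarrow> real \<Rightarrow> real \<Rightarrow> nat \<Rightarrow> nat \<Rightarrow> nat \<Rightarrow> real" where
  "Ds_invariant_form A B C D E = (\<lambda>a b c. A * basic3 1 3 6 a b c
     + B * (basic3 2 3 6 a b c - 4 * basic3 1 3 7 a b c + 2 * basic3 1 5 6 a b c)
     + C * (basic3 2 5 6 a b c - 4 * basic3 1 5 7 a b c - 2 * basic3 2 3 7 a b c)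
     + D * basic3 2 5 7 a b c
     + E * (basic3 3 4 5 a b c + 2 * basic3 1 4 7 a b c + 1/2 * basic3 2 4 6 a b c))"

lemma is_coeff3_Ds_invariant_form: "is_coeff3 (Ds_invariant_form A B C D E)"
  unfolding Ds_invariant_form_def
  by (intro is_coeff3_add is_coeff3_diff is_coeff3_scale is_coeff3_basic3) auto

lemma Ds_invariant_form_coeffs:
  fixes A B C D E :: real
  defines "F \<equiv> Ds_invariant_form A B C D E"
  shows
  "F 1 2 3 = 0" "F 1 2 4 = 0" "F 1 2 5 = 0" "F 1 2 6 = 0" "F 1 2 7 = 0"
  "F 1 3 4 = 0" "F 1 3 5 = 0" "F 1 3 6 = A" "F 1 3 7 = -4 * B" "F 1 4 5 = 0"
  "F 1 4 6 = 0" "F 1 4 7 = 2 * E" "F 1 5 6 = 2 * B" "F 1 5 7 = -4 * C" "F 1 6 7 = 0"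
  "F 2 3 4 = 0" "F 2 3 5 = 0" "F 2 3 6 = B" "F 2 3 7 = -2 * C" "F 2 4 5 = 0"
  "F 2 4 6 = E / 2" "F 2 4 7 = 0" "F 2 5 6 = C" "F 2 5 7 = D" "F 2 6 7 = 0"
  "F 3 4 5 = E" "F 3 4 6 = 0" "F 3 4 7 = 0" "F 3 5 6 = 0" "F 3 5 7 = 0"
  "F 3 6 7 = 0" "F 4 5 6 = 0" "F 4 5 7 = 0" "F 4 6 7 = 0" "F 5 6 7 = 0"
  unfolding F_def Ds_invariant_form_def basic3_def by simp_all

lemmas Ds_invariant_form_values = Ds_invariant_form_coeffs
  Ds_invariant_form_coeffs[THEN is_coeff3_permute_value(1)[OF is_coeff3_Ds_invariant_form]]
  Ds_invariant_form_coeffs[THEN is_coeff3_permute_value(2)[OF is_coeff3_Ds_invariant_form]]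
  Ds_invariant_form_coeffs[THEN is_coeff3_permute_value(3)[OF is_coeff3_Ds_invariant_form]]
  Ds_invariant_form_coeffs[THEN is_coeff3_permute_value(4)[OF is_coeff3_Ds_invariant_form]]
  Ds_invariant_form_coeffs[THEN is_coeff3_permute_value(5)[OF is_coeff3_Ds_invariant_form]]
  is_coeff3_repeated[OF is_coeff3_Ds_invariant_form]

text \<open>The simplifier rewrites \<open>1::nat\<close> to \<open>Suc 0\<close>, hence the second copy.\<close>
lemmas Ds_invariant_form_eval = Ds_invariant_form_values Ds_invariant_form_values[unfolded One_nat_def]

lemma eq_Ds_invariant_formI:
  assumes \<phi>: "is_coeff3 \<phi>" and coeffs:
    "\<phi> 1 2 3 = 0" "\<phi> 1 2 4 = 0" "\<phi> 1 2 5 = 0" "\<phi> 1 2 6 = 0" "\<phi> 1 2 7 = 0"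
    "\<phi> 1 3 4 = 0" "\<phi> 1 3 5 = 0" "\<phi> 1 3 7 = - 4 * \<phi> 2 3 6" "\<phi> 1 4 5 = 0" "\<phi> 1 4 6 = 0"
    "\<phi> 1 4 7 = 2 * \<phi> 3 4 5" "\<phi> 1 5 6 = 2 * \<phi> 2 3 6" "\<phi> 1 5 7 = - 4 * \<phi> 2 5 6"
    "\<phi> 1 6 7 = 0" "\<phi> 2 3 4 = 0" "\<phi> 2 3 5 = 0" "\<phi> 2 3 7 = - 2 * \<phi> 2 5 6" "\<phi> 2 4 5 = 0"
    "\<phi> 2 4 6 = \<phi> 3 4 5 / 2" "\<phi> 2 4 7 = 0" "\<phi> 2 6 7 = 0" "\<phi> 3 4 6 = 0" "\<phi> 3 4 7 = 0"
    "\<phi> 3 5 6 = 0" "\<phi> 3 5 7 = 0" "\<phi> 3 6 7 = 0" "\<phi> 4 5 6 = 0" "\<phi> 4 5 7 = 0"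
    "\<phi> 4 6 7 = 0" "\<phi> 5 6 7 = 0"
  shows "\<phi> = Ds_invariant_form (\<phi> 1 3 6) (\<phi> 2 3 6) (\<phi> 2 5 6) (\<phi> 2 5 7) (\<phi> 3 4 5)"
    (is "\<phi> = ?F")
proof (rule is_coeff3_eqI[OF \<phi> is_coeff3_Ds_invariant_form])
  have sorted: "\<forall>a\<in>{1..7}. \<forall>b\<in>{1..7}. \<forall>c\<in>{1..7}. a < b \<longrightarrow> b < c \<longrightarrow> \<phi> a b c = ?F a b c"
    unfolding atLeastAtMost_1_7 using coeffs by (simp add: Ds_invariant_form_eval)
  show "\<phi> a b c = ?F a b c" if "1 \<le> a" "a < b" "b < c" "c \<le> 7" for a b c
    by (rule sorted[rule_format]) (use that in auto)
qed

lemma Ds_invariant_eq_Ds_invariant_form: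
  assumes \<phi>: "is_coeff3 \<phi>" and "Ds_invariant \<phi>"
  shows "\<phi> = Ds_invariant_form (\<phi> 1 3 6) (\<phi> 2 3 6) (\<phi> 2 5 6) (\<phi> 2 5 7) (\<phi> 3 4 5)"
proof -
  note [simp] = bracket_pairing_Ds bracket_pairing_Ds[unfolded One_nat_def]
    is_coeff3_normalise[OF \<phi>]
  note eq = Ds_invariant_bracket_pairing_eq_0[OF assms]
  \<comment> \<open>a subset of the invariance equations that already determines the coefficients\<close>
  note eqs =
    eq[of 8 1 2 6] eq[of 8 1 2 7] eq[of 8 1 3 5] eq[of 8 1 3 7] eq[of 8 1 4 5] eq[of 8 1 4 6]
    eq[of 8 1 4 7] eq[of 8 1 5 6] eq[of 8 1 5 7] eq[of 8 1 6 7] eq[of 8 2 3 4] eq[of 8 2 3 5]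
    eq[of 8 2 3 6] eq[of 8 2 3 7] eq[of 8 2 4 6] eq[of 8 2 4 7] eq[of 8 2 5 6] eq[of 8 2 6 7]
    eq[of 8 3 4 5] eq[of 8 3 4 6] eq[of 8 3 4 7] eq[of 8 3 5 6] eq[of 8 3 5 7] eq[of 8 3 6 7]
    eq[of 8 4 5 6] eq[of 8 4 5 7] eq[of 8 4 6 7] eq[of 8 5 6 7] eq[of 9 1 2 3] eq[of 9 1 2 4]
    eq[of 9 1 2 5] eq[of 9 1 2 6] eq[of 9 1 2 7] eq[of 9 1 3 4] eq[of 9 1 3 5] eq[of 9 1 4 5]
    eq[of 9 1 6 7] eq[of 9 2 3 4] eq[of 9 2 3 5] eq[of 9 2 4 5] eq[of 9 2 6 7] eq[of 9 3 4 6]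
    eq[of 9 3 4 7] eq[of 9 3 5 6] eq[of 9 3 5 7] eq[of 9 3 6 7] eq[of 9 4 5 6] eq[of 9 4 5 7]
    eq[of 9 4 6 7] eq[of 9 5 6 7] eq[of 10 1 2 3] eq[of 10 1 2 4] eq[of 10 1 2 5]
    eq[of 10 1 2 6] eq[of 10 1 2 7] eq[of 10 1 3 4] eq[of 10 1 3 5] eq[of 10 1 3 7]
    eq[of 10 1 4 5] eq[of 10 1 4 6] eq[of 10 1 4 7] eq[of 10 1 5 6] eq[of 10 1 5 7]
    eq[of 10 1 6 7] eq[of 10 2 3 4] eq[of 10 2 3 5] eq[of 10 2 3 6] eq[of 10 2 3 7]
    eq[of 10 2 4 5] eq[of 10 2 4 6] eq[of 10 2 4 7] eq[of 10 2 5 6] eq[of 10 2 6 7]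
    eq[of 10 3 4 5] eq[of 10 3 4 7] eq[of 10 3 5 6] eq[of 10 3 5 7] eq[of 10 4 5 6]
  note eqs = eqs[simplified, unfolded One_nat_def[symmetric]]
  show ?thesis
    by (rule eq_Ds_invariant_formI[OF \<phi>]) (use eqs in linarith)+
qed

lemma Ds_invariant_Ds_invariant_form: "Ds_invariant (Ds_invariant_form A B C D E)"
  unfolding Ds_invariant_iff_bracket_pairing[OF is_coeff3_Ds_invariant_form] atLeastAtMost_1_10
  by (simp add: bracket_pairing_Ds bracket_pairing_Ds[unfolded One_nat_def] Ds_invariant_form_eval
      is_coeff3_normalise(5-7)[OF is_coeff3_Ds_invariant_form])

lemma Ds_invariant_iff_Ds_invariant_form:
  assumes "is_coeff3 \<phi>"
  shows "Ds_invariant \<phi> \<longleftrightarrow> (\<exists>A B C D E. \<phi> = Ds_invariant_form A B C D E)"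
  using Ds_invariant_eq_Ds_invariant_form[OF assms] Ds_invariant_Ds_invariant_form by blast

section \<open>Top-degree wedge products\<close>

text \<open>
  Expansion of the signed sum over the permutations of \<open>set xs\<close> along the first element
  \<open>a\<close>: it is sent to itself or, through a transposition, to some \<open>b\<close> in \<open>rest\<close>. The updates
  \<open>q(a := _)\<close> make the value at \<open>a\<close> explicit, so that the simplifier can evaluate \<open>F\<close>
  and discard vanishing branches as early as possible.
\<close>
primrec alt_sum :: "nat list \<Rightarrow> ((nat \<Rightarrow> nat) \<Rightarrow> real) \<Rightarrow> real" where
  "alt_sum [] F = F id"
| "alt_sum (a # rest) F = alt_sum rest (\<lambda>q. F (q(a := a)))
     - (\<Sum>b\<leftarrow>rest. alt_sum rest (\<lambda>q. F ((Transposition.transpose a b \<circ> q)(a := b))))"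

declare alt_sum.simps [simp del]

text \<open>
  As a congruence rule, this stops the simplifier from rewriting under \<open>\<lambda>b\<close> in
  \<open>\<Sum>b\<leftarrow>rest. _\<close> before the list is unfolded, which would expand \<open>alt_sum\<close> symbolically in \<open>b\<close>.
\<close>
lemma map_weak_cong: "xs = ys \<Longrightarrow> map f xs = map f ys"
  by simp

lemma alt_sum_zero [simp]: "alt_sum xs (\<lambda>q. 0) = 0"
  by (induction xs) (simp_all add: alt_sum.simps)

lemma sum_permutes_comp_transpose_fixed:
  fixes F :: "('a \<Rightarrow> 'a) \<Rightarrow> 'b::ring_1"
  assumes "a \<notin> S" and "b \<in> S" and "finite S"
  shows "(\<Sum>q | q permutes S. of_int (sign (Transposition.transpose a b \<circ> q)) * F (Transposition.transpose a b \<circ> q))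
    = - (\<Sum>q | q permutes S. of_int (sign q) * F ((Transposition.transpose a b \<circ> q)(a := b)))"
proof -
  have "of_int (sign (Transposition.transpose a b \<circ> q)) * F (Transposition.transpose a b \<circ> q)
      = - (of_int (sign q) * F ((Transposition.transpose a b \<circ> q)(a := b)))" if "q permutes S" for q
  proof -
    have "a \<noteq> b" using assms(1,2) by auto
    then have "sign (Transposition.transpose a b \<circ> q) = - sign q"
      using sign_compose[OF permutation_swap_id permutes_imp_permutation[OF assms(3) that]]
      by (simp add: sign_swap_id)
    moreover have "(Transposition.transpose a b \<circ> q)(a := b) = Transposition.transpose a b \<circ> q"
      using permutes_not_in[OF that assms(1)] by auto
    ultimately show ?thesis by simp
  qed
  then show ?thesis by (simp add: sum_negf)
qed

lemma sum_permutes_sign_eq_alt_sum: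
  assumes "distinct xs"
  shows "(\<Sum>p | p permutes set xs. of_int (sign p) * F p) = alt_sum xs F"
  using assms
proof (induction xs arbitrary: F)
  case Nil
  have "{p. p permutes set []} = {id}" by auto
  then show ?case by (simp add: id_def alt_sum.simps)
next
  case (Cons a rest)
  let ?S = "set rest" and ?\<tau> = "Transposition.transpose a"
  have fin: "finite ?S" and aS: "a \<notin> ?S" and distinct: "distinct rest"
    using Cons.prems by auto
  have "(\<Sum>q | q permutes ?S. of_int (sign (?\<tau> a \<circ> q)) * F (?\<tau> a \<circ> q))
      = (\<Sum>q | q permutes ?S. of_int (sign q) * F (q(a := a)))"
    using permutes_not_in[OF _ aS] by (intro sum.cong) (auto simp: fun_upd_idem)
  then have "(\<Sum>p | p permutes set (a # rest). of_int (sign p) * F p) =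
      (\<Sum>q | q permutes ?S. of_int (sign q) * F (q(a := a)))
      - (\<Sum>b\<in>?S. \<Sum>q | q permutes ?S. of_int (sign q) * F ((?\<tau> b \<circ> q)(a := b)))"
    using sum_over_permutations_insert[OF fin aS, of "\<lambda>p. of_int (sign p) * F p"] fin aS
    by (simp add: sum.insert sum_permutes_comp_transpose_fixed sum_negf)
  also have "\<dots> = alt_sum (a # rest) F"
    using distinct by (simp add: Cons.IH sum_list_distinct_conv_sum_set alt_sum.simps)
  finally show ?case .
qed

lemma wedge223_top_commute: "wedge223_top \<beta> \<gamma> \<phi> = wedge223_top \<gamma> \<beta> \<phi>"
proof -
  let ?\<sigma> = "Transposition.transpose (1::nat) 3 \<circ> Transposition.transpose 2 4"
  have \<sigma>: "?\<sigma> permutes {1..7}"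
    by (intro permutes_compose permutes_swap_id) auto
  have "sign ?\<sigma> = 1"
    by (simp add: sign_compose permutation_swap_id sign_swap_id)
  then have "sign (p \<circ> ?\<sigma>) = sign p" if "p permutes {1..7}" for p
    using sign_compose[OF permutes_imp_permutation[OF _ that] permutes_imp_permutation[OF _ \<sigma>]] by simp
  then show ?thesis
    unfolding wedge223_top_def
    by (subst sum_permutations_compose_right[OF \<sigma>]) (simp add: mult_ac)
qed

lemma sum_permutes_symmetrise:
  fixes G :: "('a \<Rightarrow> 'a) \<Rightarrow> 'b::comm_semiring_1"
  assumes hs: "\<And>h. h \<in> set hs \<Longrightarrow> h permutes S"
    and invariant: "\<And>p h. p permutes S \<Longrightarrow> h \<in> set hs \<Longrightarrow> G (p \<circ> h) = G p"
    and unique: "\<And>p. p permutes S \<Longrightarrow> (\<Sum>h\<leftarrow>hs. of_bool (P (p \<circ> h))) = (1::'b)"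
  shows "(\<Sum>p | p permutes S. G p) = of_nat (length hs) * (\<Sum>p | p permutes S. of_bool (P p) * G p)"
proof -
  have "G p = (\<Sum>h\<leftarrow>hs. of_bool (P (p \<circ> h)) * G (p \<circ> h))" if "p permutes S" for p
  proof -
    have "(\<Sum>h\<leftarrow>hs. of_bool (P (p \<circ> h)) * G (p \<circ> h)) = (\<Sum>h\<leftarrow>hs. of_bool (P (p \<circ> h)) * G p)"
      using invariant[OF that] by (intro arg_cong[of _ _ sum_list] map_cong) simp_all
    also have "\<dots> = G p"
      unfolding sum_list_mult_const unique[OF that] by simp
    finally show ?thesis by simp
  qed
  then have "(\<Sum>p | p permutes S. G p) = (\<Sum>p | p permutes S. \<Sum>h\<leftarrow>hs. of_bool (P (p \<circ> h)) * G (p \<circ> h))"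
    by (intro sum.cong) auto
  also have "\<dots> = (\<Sum>h\<leftarrow>hs. \<Sum>p | p permutes S. of_bool (P (p \<circ> h)) * G (p \<circ> h))"
    by (induction hs) (simp_all add: sum.distrib)
  also have "\<dots> = (\<Sum>h\<leftarrow>hs. \<Sum>p | p permutes S. of_bool (P p) * G p)"
    using sum_permutations_compose_right[OF hs, of _ "\<lambda>p. of_bool (P p) * G p"]
    by (intro arg_cong[of _ _ sum_list] map_cong) auto
  finally show ?thesis by (simp add: sum_list_triv)
qed

lemma sign_comp_transpose:
  assumes "permutation p" and "a \<noteq> b"
  shows "sign (p \<circ> Transposition.transpose a b) = - sign p"
  using sign_compose[OF assms(1) permutation_swap_id] assms(2) by (simp add: sign_swap_id)

lemma sum_permutes_sort_pair:
  fixes G :: "('a::linorder \<Rightarrow> 'a) \<Rightarrow> 'b::comm_semiring_1"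
  assumes "i \<in> S" and "j \<in> S" and "i \<noteq> j"
    and invariant: "\<And>p. p permutes S \<Longrightarrow> G (p \<circ> Transposition.transpose i j) = G p"
  shows "(\<Sum>p | p permutes S. G p) = 2 * (\<Sum>p | p permutes S. of_bool (p i < p j) * G p)"
proof -
  let ?hs = "[id, Transposition.transpose i j]"
  have "(\<Sum>p | p permutes S. G p) = of_nat (length ?hs) * (\<Sum>p | p permutes S. of_bool (p i < p j) * G p)"
  proof (rule sum_permutes_symmetrise)
    show "h permutes S" if "h \<in> set ?hs" for h
      using that assms(1,2) by (auto intro: permutes_swap_id)
    show "G (p \<circ> h) = G p" if "p permutes S" and "h \<in> set ?hs" for p h
      using that invariant by auto
    show "(\<Sum>h\<leftarrow>?hs. of_bool ((p \<circ> h) i < (p \<circ> h) j)) = (1::'b)" if "p permutes S" for p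
    proof -
      have "p i \<noteq> p j"
        using permutes_inj[OF that] assms(3) by (auto dest: injD)
      then show ?thesis
        by (cases rule: linorder_cases[of "p i" "p j"]) (auto simp: of_bool_def dest: order.asym)
    qed
  qed
  then show ?thesis by simp
qed

lemma of_bool_orderings3:
  fixes a b c :: nat
  assumes "a \<noteq> b" "b \<noteq> c" "a \<noteq> c"
  shows "of_bool (a < b \<and> b < c) + (of_bool (b < a \<and> a < c) + (of_bool (a < c \<and> c < b)
    + (of_bool (c < b \<and> b < a) + (of_bool (b < c \<and> c < a) + of_bool (c < a \<and> a < b))))) = (1::'b::semiring_1)"
  using assms
  by (cases a b rule: linorder_cases; cases b c rule: linorder_cases; cases a c rule: linorder_cases)
    simp_all

lemma sum_permutes_sort_triple:
  fixes G :: "(nat \<Rightarrow> nat) \<Rightarrow> 'b::comm_semiring_1"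
  assumes "i \<in> S" and "j \<in> S" and "k \<in> S" and "i \<noteq> j" and "j \<noteq> k" and "i \<noteq> k"
    and invariant_ij: "\<And>p. p permutes S \<Longrightarrow> G (p \<circ> Transposition.transpose i j) = G p"
    and invariant_jk: "\<And>p. p permutes S \<Longrightarrow> G (p \<circ> Transposition.transpose j k) = G p"
  shows "(\<Sum>p | p permutes S. G p) = 6 * (\<Sum>p | p permutes S. of_bool (p i < p j \<and> p j < p k) * G p)"
proof -
  let ?\<tau> = "Transposition.transpose :: nat \<Rightarrow> nat \<Rightarrow> nat \<Rightarrow> nat"
  let ?hs = "[id, ?\<tau> i j, ?\<tau> j k, ?\<tau> i k, ?\<tau> i j \<circ> ?\<tau> j k, ?\<tau> j k \<circ> ?\<tau> i j]"
  have ij: "?\<tau> i j permutes S" and jk: "?\<tau> j k permutes S"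
    using assms(1-3) by (simp_all add: permutes_swap_id)
  have ij_jk: "G (p \<circ> (?\<tau> i j \<circ> ?\<tau> j k)) = G p" and jk_ij: "G (p \<circ> (?\<tau> j k \<circ> ?\<tau> i j)) = G p"
    if "p permutes S" for p
    using invariant_ij invariant_jk permutes_compose[OF ij that] permutes_compose[OF jk that] that
    by (simp_all flip: comp_assoc)
  have "G (p \<circ> ?\<tau> i k) = G p" if "p permutes S" for p
  proof -
    have "p \<circ> ?\<tau> i k = ((p \<circ> ?\<tau> i j) \<circ> ?\<tau> j k) \<circ> ?\<tau> i j"
      by (simp add: transpose_comp_triple[OF assms(6,5), symmetric] comp_assoc)
    moreover have "p \<circ> ?\<tau> i j permutes S" and "(p \<circ> ?\<tau> i j) \<circ> ?\<tau> j k permutes S"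
      using ij jk that by (blast intro: permutes_compose)+
    ultimately show ?thesis
      using invariant_ij invariant_jk that by simp
  qed
  then have "(\<Sum>p | p permutes S. G p)
      = of_nat (length ?hs) * (\<Sum>p | p permutes S. of_bool (p i < p j \<and> p j < p k) * G p)"
  proof (intro sum_permutes_symmetrise)
    show "h permutes S" if "h \<in> set ?hs" for h
      using that assms(1-3) by (auto intro!: permutes_swap_id permutes_compose)
    show "(\<Sum>h\<leftarrow>?hs. of_bool ((p \<circ> h) i < (p \<circ> h) j \<and> (p \<circ> h) j < (p \<circ> h) k)) = (1::'b)"
      if "p permutes S" for p
    proof -
      have "p i \<noteq> p j" "p j \<noteq> p k" "p i \<noteq> p k"
        using permutes_inj[OF that] assms(4-6) by (simp_all add: inj_eq)
      with assms(4-6) show ?thesis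
        by (simp only: list.map sum_list_simps comp_apply id_apply transpose_apply_first
            transpose_apply_second transpose_apply_other not_sym simp_thms add_0_right)
          (rule of_bool_orderings3)
    qed
  qed (use invariant_ij invariant_jk ij_jk jk_ij in auto)
  then show ?thesis by simp
qed

lemma wedge223_top_eq_sorted_sum:
  assumes \<beta>: "\<And>a b. \<beta> b a = - \<beta> a b" and \<gamma>: "\<And>a b. \<gamma> b a = - \<gamma> a b" and \<phi>: "is_coeff3 \<phi>"
  shows "wedge223_top \<beta> \<gamma> \<phi> = (\<Sum>p | p permutes {1..7}. of_int (sign p)
      * (of_bool (p 1 < p 2) * \<beta> (p 1) (p 2)) * (of_bool (p 3 < p 4) * \<gamma> (p 3) (p 4))
      * (of_bool (p 5 < p 6 \<and> p 6 < p 7) * \<phi> (p 5) (p 6) (p 7)))"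
proof -
  let ?S = "{1..7::nat}" and ?\<tau> = "Transposition.transpose :: nat \<Rightarrow> nat \<Rightarrow> nat \<Rightarrow> nat"
  define G where "G p = of_int (sign p) * \<beta> (p 1) (p 2) * \<gamma> (p 3) (p 4) * \<phi> (p 5) (p 6) (p 7)" for p
  have odd: "sign (p \<circ> ?\<tau> i j) = - sign p" if "p permutes ?S" "i \<noteq> j" for p i j
    using sign_comp_transpose[OF permutes_imp_permutation[OF _ that(1)] that(2)] by simp
  have "(\<Sum>p | p permutes ?S. G p) = 2 * (\<Sum>p | p permutes ?S. of_bool (p 1 < p 2) * G p)"
  proof (rule sum_permutes_sort_pair)
    show "G (p \<circ> ?\<tau> 1 2) = G p" if "p permutes ?S" for p
      using odd[OF that] \<beta>[of "p 1" "p 2"] by (simp add: G_def)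
  qed simp_all
  also have "(\<Sum>p | p permutes ?S. of_bool (p 1 < p 2) * G p)
      = 2 * (\<Sum>p | p permutes ?S. of_bool (p 3 < p 4) * (of_bool (p 1 < p 2) * G p))"
  proof (rule sum_permutes_sort_pair)
    show "of_bool ((p \<circ> ?\<tau> 3 4) 1 < (p \<circ> ?\<tau> 3 4) 2) * G (p \<circ> ?\<tau> 3 4) = of_bool (p 1 < p 2) * G p"
      if "p permutes ?S" for p
      using odd[OF that] \<gamma>[of "p 3" "p 4"] by (simp add: G_def)
  qed simp_all
  also have "(\<Sum>p | p permutes ?S. of_bool (p 3 < p 4) * (of_bool (p 1 < p 2) * G p))
      = 6 * (\<Sum>p | p permutes ?S. of_bool (p 5 < p 6 \<and> p 6 < p 7) * (of_bool (p 3 < p 4) * (of_bool (p 1 < p 2) * G p)))"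
  proof (rule sum_permutes_sort_triple)
    let ?H = "\<lambda>p. of_bool (p 3 < p 4) * (of_bool (p 1 < p 2) * G p)"
    show "?H (p \<circ> ?\<tau> 5 6) = ?H p" if "p permutes ?S" for p
      using odd[OF that] is_coeff3_swap12[OF \<phi>, of "p 5" "p 6" "p 7"] by (simp add: G_def)
    show "?H (p \<circ> ?\<tau> 6 7) = ?H p" if "p permutes ?S" for p
      using odd[OF that] is_coeff3_swap23[OF \<phi>, of "p 5" "p 7" "p 6"] by (simp add: G_def)
  qed simp_all
  finally show ?thesis
    unfolding wedge223_top_def G_def by (simp add: sum_distrib_left mult_ac)
qed

section \<open>Compatibility with \<open>g\<^sub>K\<close>\<close>
lemma wedge223_top_contraction_eq_alt_sum:
  assumes "is_coeff3 \<phi>"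
  shows "wedge223_top (\<phi> \<mu>) (\<phi> \<nu>) \<phi> = alt_sum [1, 2, 3, 4, 5, 6, 7] (\<lambda>p.
      of_bool (p 1 < p 2) * \<phi> \<mu> (p 1) (p 2) * (of_bool (p 3 < p 4) * \<phi> \<nu> (p 3) (p 4))
      * (of_bool (p 5 < p 6 \<and> p 6 < p 7) * \<phi> (p 5) (p 6) (p 7)))"
proof -
  have "{1..7::nat} = set [1, 2, 3, 4, 5, 6, 7]" unfolding atLeastAtMost_1_7 by simp
  then show ?thesis
    unfolding wedge223_top_eq_sorted_sum[OF is_coeff3_swap23[OF assms] is_coeff3_swap23[OF assms] assms]
    by (simp add: sum_permutes_sign_eq_alt_sum[symmetric] mult_ac)
qed

lemma wedge223_top_Ds_invariant_form:
  fixes A B C D E :: real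
  defines "F \<equiv> Ds_invariant_form A B C D E"
  shows "wedge223_top (F 4) (F 4) F = 6 * E ^ 3"
    and "wedge223_top (F 3) (F 5) F = - 3 * E * (A * D + 4 * B * C)"
    and "wedge223_top (F 1) (F 6) F = 12 * E * (2 * B\<^sup>2 - A * C)"
    and "wedge223_top (F 2) (F 7) F = - 12 * E * (B * D + 2 * C\<^sup>2)"
  unfolding F_def wedge223_top_contraction_eq_alt_sum[OF is_coeff3_Ds_invariant_form]
  by (simp add: alt_sum.simps Ds_invariant_form_eval cong: map_weak_cong,
      simp add: algebra_simps power2_eq_square power3_eq_cube)+

lemma gK_commute: "gK \<mu> \<nu> = gK \<nu> \<mu>"
  unfolding gK_def odot_def by auto

lemma compatible_gK_Ds_invariant_form_normalised:
  assumes "A \<noteq> 0"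
  shows "compatible gK (Ds_invariant_form A 0 0 (1 / A) 1)"
proof -
  let ?F = "Ds_invariant_form A 0 0 (1 / A) 1"
  have "\<forall>\<mu>\<in>{1..7}. \<forall>\<nu>\<in>{1..7}. \<mu> \<le> \<nu> \<longrightarrow> wedge223_top (?F \<mu>) (?F \<nu>) ?F = 3 * gK \<mu> \<nu>"
    unfolding atLeastAtMost_1_7
    by (simp only: ball_simps(5,7) numeral_le_iff le_num_simps less_num_simps one_le_numeral numeral_le_one_iff
        order_refl simp_thms,
      simp only: wedge223_top_contraction_eq_alt_sum[OF is_coeff3_Ds_invariant_form],
      simp add: assms alt_sum.simps Ds_invariant_form_eval gK_def odot_def cong: map_weak_cong)
  note upper = this
  show ?thesis
    unfolding compatible_def
  proof (intro ballI)
    fix \<mu> \<nu> :: nat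
    assume range: "\<mu> \<in> {1..7}" "\<nu> \<in> {1..7}"
    show "wedge223_top (?F \<mu>) (?F \<nu>) ?F = 3 * gK \<mu> \<nu>"
    proof (cases "\<mu> \<le> \<nu>")
      case True
      with range upper show ?thesis by blast
    next
      case False
      with range upper have "wedge223_top (?F \<nu>) (?F \<mu>) ?F = 3 * gK \<nu> \<mu>" by auto
      then show ?thesis by (simp only: wedge223_top_commute[of "?F \<mu>"] gK_commute[of \<mu>])
    qed
  qed
qed

lemma B_C_eq_0_if_compatibility_equations:
  fixes A B C D :: real
  assumes "A * D + 4 * B * C = 1" and "A * C = 2 * B\<^sup>2" and "B * D = - 2 * C\<^sup>2"
  shows "B = 0" and "C = 0"
proof -
  have "B * C * (A * D + 4 * B * C) = (A * C) * (B * D) + 4 * B\<^sup>2 * C\<^sup>2"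
    by (simp add: algebra_simps power2_eq_square)
  also have "\<dots> = 0"
    using assms(2,3) by (simp add: algebra_simps power2_eq_square)
  finally have "B * C = 0" using assms(1) by simp
  then show "C = 0" using assms(3) by auto
  then show "B = 0" using assms(2) by simp
qed

lemma compatible_gK_Ds_invariant_form_iff:
  "compatible gK (Ds_invariant_form A B C D E) \<longleftrightarrow> B = 0 \<and> C = 0 \<and> E = 1 \<and> A \<noteq> 0 \<and> D = 1 / A"
proof
  let ?F = "Ds_invariant_form A B C D E"
  assume "compatible gK ?F"
  then have w: "wedge223_top (?F \<mu>) (?F \<nu>) ?F = 3 * gK \<mu> \<nu>" if "\<mu> \<in> {1..7}" "\<nu> \<in> {1..7}" for \<mu> \<nu>
    using that unfolding compatible_def by blast
  have "E ^ 3 = 1"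
    using w[of 4 4] unfolding wedge223_top_Ds_invariant_form by (simp add: gK_def odot_def)
  then have E: "E = 1"
    using odd_real_root_unique[of 3 E 1] by simp
  have "A * D + 4 * B * C = 1" "A * C = 2 * B\<^sup>2" "B * D = - 2 * C\<^sup>2"
    using w[of 3 5] w[of 1 6] w[of 2 7] unfolding wedge223_top_Ds_invariant_form
    by (simp_all add: E gK_def odot_def)
  note eqs = this
  then have B: "B = 0" and C: "C = 0"
    by (rule B_C_eq_0_if_compatibility_equations)+
  with eqs(1) have AD: "A * D = 1" by simp
  then have "A \<noteq> 0" by auto
  with AD have "D = 1 / A" by (simp add: field_simps)
  with E B C \<open>A \<noteq> 0\<close> show "B = 0 \<and> C = 0 \<and> E = 1 \<and> A \<noteq> 0 \<and> D = 1 / A"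
    by simp
next
  assume "B = 0 \<and> C = 0 \<and> E = 1 \<and> A \<noteq> 0 \<and> D = 1 / A"
  then show "compatible gK (Ds_invariant_form A B C D E)"
    using compatible_gK_Ds_invariant_form_normalised by auto
qed

lemma phi_family_eq_Ds_invariant_form: "phi_family q = Ds_invariant_form q 0 0 (1 / q) 1"
  by (simp add: fun_eq_iff phi_family_def Ds_invariant_form_def algebra_simps)

theorem corollary4p4:
  fixes \<phi> :: "nat \<Rightarrow> nat \<Rightarrow> nat \<Rightarrow> real"
  assumes "is_coeff3 \<phi>"
  shows "(Ds_invariant \<phi> \<and> compatible gK \<phi>) \<longleftrightarrow> (\<exists>q. q \<noteq> 0 \<and> \<phi> = phi_family q)"
proof -
  have "(Ds_invariant \<phi> \<and> compatible gK \<phi>) \<longleftrightarrow>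
      (\<exists>A B C D E. \<phi> = Ds_invariant_form A B C D E \<and> compatible gK (Ds_invariant_form A B C D E))"
    using Ds_invariant_iff_Ds_invariant_form[OF assms] by blast
  also have "\<dots> \<longleftrightarrow> (\<exists>q. q \<noteq> 0 \<and> \<phi> = Ds_invariant_form q 0 0 (1 / q) 1)"
    by (auto simp: compatible_gK_Ds_invariant_form_iff)
  also have "\<dots> \<longleftrightarrow> (\<exists>q. q \<noteq> 0 \<and> \<phi> = phi_family q)"
    by (simp add: phi_family_eq_Ds_invariant_form)
  finally show ?thesis .
qed

end
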